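(* Let $d\ge 2$ and $t,k$ be positive integers. Let $\mathcal{S}$ be a finite collection of spheres in $\mathbb{R}^d$ whose intersection graph $G=G(\mathcal{S})$ does not contain $K_{t,t}$ as a subgraph, and suppose every nested subset of $\mathcal{S}$ has size at most $k$. Then for every positive integer $r$, $\mathrm{scol}_r(G)\le 2kt(2r+2)^d$.
   Context: A sphere in $\mathbb{R}^d$ is the boundary of a closed ball of positive radius; $B(S)$ is the closed ball with boundary $S$. $G(\mathcal{S})$ has vertex set $\mathcal{S}$, two spheres adjacent iff they intersect. A sphere $S'$ contains a different sphere $S$ if $B(S)\subseteq B(S')$; a collection is nested if of any two of its spheres one contains the other. Given a linear order $\le$ on $V(G)$ and $v\in V(G)$, a vertex $u$ is strongly $r$-reachable from $v$ if $u\le v$ and there is a $v$–$u$ path of length at most $r$ in which $u$ is the only vertex smaller than $v$; the $r$-width of $\le$ is the maximum over $v$ of the number of vertices strongly $r$-reachable from $v$, and $\mathrm{scol}_r(G)$ is the minimum $r$-width over all linear orders of $V(G)$. *)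

theory Defs
  imports "HOL-Analysis.Analysis"
begin

definition is_sphere :: "'a::euclidean_space set \<Rightarrow> bool" where
  "is_sphere S \<longleftrightarrow> (\<exists>c r. r > 0 \<and> S = sphere c r)"

definition sball :: "'a::euclidean_space set \<Rightarrow> 'a set" where
  "sball S = (THE B. \<exists>c r. r > 0 \<and> S = sphere c r \<and> B = cball c r)"

definition sphere_contains :: "'a::euclidean_space set \<Rightarrow> 'a set \<Rightarrow> bool" where
  "sphere_contains S' S \<longleftrightarrow> S \<noteq> S' \<and> sball S \<subseteq> sball S'"

definition nested :: "'a::euclidean_space set set \<Rightarrow> bool" where
  "nested N \<longleftrightarrow> (\<forall>S\<in>N. \<forall>S'\<in>N. S \<noteq> S' \<longrightarrow> sphere_contains S S' \<or> sphere_contains S' S)"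

definition sphere_adj :: "'a set \<Rightarrow> 'a set \<Rightarrow> bool" where
  "sphere_adj S S' \<longleftrightarrow> S \<noteq> S' \<and> S \<inter> S' \<noteq> {}"

text \<open>Graph (V, E) with E a symmetric irreflexive adjacency relation contains K_{t,t} as a subgraph.\<close>
definition contains_Ktt :: "'v set \<Rightarrow> ('v \<Rightarrow> 'v \<Rightarrow> bool) \<Rightarrow> nat \<Rightarrow> bool" where
  "contains_Ktt V E t \<longleftrightarrow> (\<exists>A B. A \<subseteq> V \<and> B \<subseteq> V \<and> A \<inter> B = {} \<and> card A = t \<and> card B = t
      \<and> (\<forall>a\<in>A. \<forall>b\<in>B. E a b))"

definition is_path :: "'v set \<Rightarrow> ('v \<Rightarrow> 'v \<Rightarrow> bool) \<Rightarrow> 'v list \<Rightarrow> bool" where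
  "is_path V E p \<longleftrightarrow> p \<noteq> [] \<and> distinct p \<and> set p \<subseteq> V \<and>
      (\<forall>i. Suc i < length p \<longrightarrow> E (p ! i) (p ! Suc i))"

text \<open>Linear order L on V given as a relation: (x,y) \<in> L means x \<le> y.
  u is strongly r-reachable from v.\<close>
definition strongly_reachable ::
    "'v set \<Rightarrow> ('v \<Rightarrow> 'v \<Rightarrow> bool) \<Rightarrow> 'v rel \<Rightarrow> nat \<Rightarrow> 'v \<Rightarrow> 'v \<Rightarrow> bool" where
  "strongly_reachable V E L r v u \<longleftrightarrow> (u, v) \<in> L \<and>
     (\<exists>p. is_path V E p \<and> hd p = v \<and> last p = u \<and> length p \<le> r + 1 \<and>
          (\<forall>w\<in>set p. w \<noteq> u \<longrightarrow> (v, w) \<in> L))"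

definition sreach_set :: "'v set \<Rightarrow> ('v \<Rightarrow> 'v \<Rightarrow> bool) \<Rightarrow> 'v rel \<Rightarrow> nat \<Rightarrow> 'v \<Rightarrow> 'v set" where
  "sreach_set V E L r v = {u \<in> V. strongly_reachable V E L r v u}"

definition r_width :: "'v set \<Rightarrow> ('v \<Rightarrow> 'v \<Rightarrow> bool) \<Rightarrow> 'v rel \<Rightarrow> nat \<Rightarrow> nat" where
  "r_width V E L r = Max (insert 0 ((\<lambda>v. card (sreach_set V E L r v)) ` V))"

definition scol :: "'v set \<Rightarrow> ('v \<Rightarrow> 'v \<Rightarrow> bool) \<Rightarrow> nat \<Rightarrow> nat" where
  "scol V E r = Min {r_width V E L r | L. linear_order_on V L}"

end

theory Submission
  imports Defs
begin

text \<open>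
  Order the spheres by non-increasing radius. If \<open>u\<close> is strongly \<open>r\<close>-reachable from \<open>v\<close>, then
  \<open>u\<close> is at least as large as \<open>v\<close>, and since the inner vertices of the path are no larger than
  \<open>v\<close>, \<open>u\<close> meets the ball of radius \<open>(2r - 1) rad v\<close> around the centre of \<open>v\<close>. Hence
  \<open>B(u)\<close> contains a ball of radius \<open>rad v\<close> lying in the ball of radius \<open>(2r + 1) rad v\<close>.
  No point lies in more than \<open>k(2t - 1)\<close> of the balls \<open>B(u)\<close>: spheres whose balls share a
  point and which are not nested intersect (this uses \<open>d \<ge> 2\<close>), so removing the maximal
  spheres \<open>k\<close> times splits them into \<open>k\<close> cliques of \<open>G\<close>, each of size less than \<open>2t\<close> since
  \<open>G\<close> contains no K_{t,t}. Comparing volumes bounds the number of strongly reachable spheres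
  by \<open>k(2t - 1)(2r + 1)\<^sup>d\<close>.
\<close>

section \<open>Centre and radius of a sphere\<close>

lemma sphere_eq_sphereD:
  fixes c c' :: "'a::euclidean_space"
  assumes r: "r > 0" and r': "r' > 0" and eq: "sphere c r = sphere c' r'"
  shows "c = c' \<and> r = r'"
proof -
  have cc: "c = c'"
  proof (rule ccontr)
    assume "c \<noteq> c'"
    define D where "D = norm (c - c')"
    define u where "u = (1/D) *\<^sub>R (c - c')"
    have D: "D > 0" using \<open>c \<noteq> c'\<close> by (simp add: D_def)
    have cu: "c - c' = D *\<^sub>R u" and nu: "norm u = 1"
      using D by (simp_all add: u_def D_def)
    have "c + r *\<^sub>R u \<in> sphere c' r'" "c - r *\<^sub>R u \<in> sphere c' r'"
      unfolding eq[symmetric] using r nu by (simp_all add: dist_norm)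
    then have "norm (c + r *\<^sub>R u - c') = r'" "norm (c - r *\<^sub>R u - c') = r'"
      by (simp_all add: dist_norm norm_minus_commute)
    moreover have "c + r *\<^sub>R u - c' = (D + r) *\<^sub>R u" "c - r *\<^sub>R u - c' = (D - r) *\<^sub>R u"
      using cu by (simp_all add: algebra_simps)
    ultimately have "D + r = r'" "\<bar>D - r\<bar> = r'" using D r nu by simp_all
    then show False using D r by linarith
  qed
  obtain e :: 'a where e: "norm e = 1" using vector_choose_size[of 1] by auto
  have "c + r *\<^sub>R e \<in> sphere c' r'" using r e eq[symmetric] by (auto simp: dist_norm)
  then have "r = r'" using cc r e by (simp add: dist_norm)
  with cc show ?thesis by simp
qed

text \<open>Centre and radius are only meaningful for spheres; elsewhere they are unspecified.\<close>
definition cen :: "'a::euclidean_space set \<Rightarrow> 'a" where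
  "cen S = (SOME c. \<exists>r>0. S = sphere c r)"

definition rad :: "'a::euclidean_space set \<Rightarrow> real" where
  "rad S = (SOME r. r > 0 \<and> S = sphere (cen S) r)"

lemma is_sphere_cen_rad:
  fixes S :: "'a::euclidean_space set"
  assumes "is_sphere S"
  shows "rad S > 0" "S = sphere (cen S) (rad S)" "sball S = cball (cen S) (rad S)"
proof -
  have "\<exists>r>0. S = sphere (cen S) r"
    using assms unfolding is_sphere_def cen_def by (rule someI_ex[where P="\<lambda>c. \<exists>r>0. S = sphere c r"])
  then have cr: "rad S > 0 \<and> S = sphere (cen S) (rad S)"
    unfolding rad_def by (rule someI_ex)
  then show "rad S > 0" "S = sphere (cen S) (rad S)" by auto
  show "sball S = cball (cen S) (rad S)"
    unfolding sball_def
  proof (rule the_equality)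
    fix B assume "\<exists>c r. r > 0 \<and> S = sphere c r \<and> B = cball c r"
    then obtain c r where "r > 0" "S = sphere c r" "B = cball c r" by blast
    have "sphere c r = sphere (cen S) (rad S)" using \<open>S = sphere c r\<close> cr by metis
    from sphere_eq_sphereD[OF \<open>r > 0\<close> _ this] cr have "c = cen S \<and> r = rad S" by blast
    with \<open>B = cball c r\<close> show "B = cball (cen S) (rad S)" by simp
  qed (use cr in metis)
qed

lemma mem_is_sphere_iff:
  assumes "is_sphere S"
  shows "x \<in> S \<longleftrightarrow> dist (cen S) x = rad S"
  using is_sphere_cen_rad(2)[OF assms] by (metis mem_sphere)

lemma sball_inject:
  assumes "is_sphere a" "is_sphere b" "sball a = sball b"
  shows "a = b"
proof -
  have "cen a = cen b \<and> rad a = rad b"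
    using assms(3) is_sphere_cen_rad(1,3)[OF assms(1)] is_sphere_cen_rad(1,3)[OF assms(2)]
    by (simp add: cball_eq_cball_iff)
  then show ?thesis using is_sphere_cen_rad(2) assms(1,2) by metis
qed

lemma nested_iff: "nested N \<longleftrightarrow> (\<forall>a\<in>N. \<forall>b\<in>N. sball a \<subseteq> sball b \<or> sball b \<subseteq> sball a)"
  unfolding nested_def sphere_contains_def by (metis order_refl)

section \<open>Euclidean geometry of balls\<close>

text \<open>The only use of \<open>DIM('a) \<ge> 2\<close>: on the connected sphere \<open>sphere c1 r1\<close> the distance to
  \<open>c2\<close> attains every value between \<open>\<bar>dist c1 c2 - r1\<bar>\<close> and \<open>dist c1 c2 + r1\<close>.\<close>
lemma cballs_overlap_imp_spheres_meet:
  fixes c1 c2 :: "'a::euclidean_space"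
  assumes dim: "DIM('a) \<ge> 2" and r1: "r1 > 0" and r2: "r2 > 0"
    and x1: "x \<in> cball c1 r1" and x2: "x \<in> cball c2 r2"
    and n1: "\<not> cball c1 r1 \<subseteq> cball c2 r2" and n2: "\<not> cball c2 r2 \<subseteq> cball c1 r1"
  shows "sphere c1 r1 \<inter> sphere c2 r2 \<noteq> {}"
proof -
  define D where "D = dist c1 c2"
  have a: "D + r1 > r2" using n1 r1 by (auto simp: cball_subset_cball_iff D_def dist_commute)
  have b: "D + r2 > r1" using n2 r2 by (auto simp: cball_subset_cball_iff D_def dist_commute)
  have c: "D \<le> r1 + r2" using x1 x2 dist_triangle[of c1 c2 x] by (auto simp: D_def dist_commute)
  have D: "D > 0" using a b by linarith
  define u where "u = (1/D) *\<^sub>R (c1 - c2)"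
  have cu: "c1 - c2 = D *\<^sub>R u" and nu: "norm u = 1"
    using D by (simp_all add: u_def D_def dist_norm)
  define y1 where "y1 = c1 - r1 *\<^sub>R u"
  define y2 where "y2 = c1 + r1 *\<^sub>R u"
  have y12: "y1 \<in> sphere c1 r1" "y2 \<in> sphere c1 r1"
    using r1 nu by (simp_all add: y1_def y2_def dist_norm)
  have "y1 - c2 = (D - r1) *\<^sub>R u" "y2 - c2 = (D + r1) *\<^sub>R u"
    using cu by (simp_all add: y1_def y2_def algebra_simps)
  then have d1: "dist y1 c2 = \<bar>D - r1\<bar>" and d2: "dist y2 c2 = D + r1"
    using nu D r1 by (simp_all add: dist_norm)
  have conn: "connected ((\<lambda>y. dist y c2) ` sphere c1 r1)"
    by (rule connected_continuous_image[OF _ connected_sphere[OF dim]]) (intro continuous_intros)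
  have "r2 \<in> (\<lambda>y. dist y c2) ` sphere c1 r1"
  proof (rule connectedD_interval[OF conn, of "dist y1 c2" "dist y2 c2"])
    show "dist y1 c2 \<le> r2" unfolding d1 using b c by arith
    show "r2 \<le> dist y2 c2" unfolding d2 using a by arith
  qed (use y12 in blast)+
  then show ?thesis by (auto simp: dist_commute)
qed

lemma sphere_subset_cball_if_meets:
  assumes "is_sphere w" "z \<in> w" "z \<in> cball c R"
  shows "w \<subseteq> cball c (R + 2 * rad w)"
proof
  fix y assume "y \<in> w"
  then have "dist z y \<le> 2 * rad w"
    using assms dist_triangle[of z y "cen w"] mem_is_sphere_iff[OF assms(1)] by (simp add: dist_commute)
  then show "y \<in> cball c (R + 2 * rad w)" using assms(3) dist_triangle[of c y z] by auto
qed

lemma cball_inside_cball_at_sphere_point: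
  fixes c p :: "'a::euclidean_space"
  assumes "\<rho> > 0" "\<rho> \<le> R" and p: "p \<in> sphere c R"
  obtains q where "cball q \<rho> \<subseteq> cball c R" "cball q \<rho> \<subseteq> cball p (2 * \<rho>)"
proof
  define q where "q = p + (\<rho> / R) *\<^sub>R (c - p)"
  have n: "norm (c - p) = R" using p by (simp add: dist_norm)
  have R: "R > 0" using assms by linarith
  have "q - p = (\<rho> / R) *\<^sub>R (c - p)" by (simp add: q_def)
  then have 1: "dist q p = \<rho>" using n R assms by (simp add: dist_norm)
  have "c - q = (1 - \<rho> / R) *\<^sub>R (c - p)" by (simp add: q_def algebra_simps)
  moreover have "\<bar>1 - \<rho> / R\<bar> * R = R - \<rho>" using assms R by (simp add: field_simps)
  ultimately have 2: "dist q c = R - \<rho>" using n by (simp add: dist_norm norm_minus_commute)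
  show "cball q \<rho> \<subseteq> cball c R" "cball q \<rho> \<subseteq> cball p (2 * \<rho>)"
    using 1 2 by (auto simp: cball_subset_cball_iff)
qed

text \<open>Every step along a path of spheres of radius at most \<open>\<rho>\<close> moves at most \<open>2\<rho>\<close> away.\<close>
lemma sphere_chain_subset_cball:
  assumes "\<And>j. Suc j \<le> i \<Longrightarrow> p ! j \<inter> p ! Suc j \<noteq> {}"
    and "\<And>j. 0 < j \<Longrightarrow> j \<le> i \<Longrightarrow> is_sphere (p ! j) \<and> rad (p ! j) \<le> \<rho>"
    and "p ! 0 \<subseteq> cball c \<rho>"
  shows "p ! i \<subseteq> cball c ((2 * real i + 1) * \<rho>)"
  using assms
proof (induction i)
  case (Suc i)
  then have IH: "p ! i \<subseteq> cball c ((2 * real i + 1) * \<rho>)" by simp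
  obtain z where z: "z \<in> p ! i" "z \<in> p ! Suc i" using Suc.prems(1)[of i] by blast
  have w: "is_sphere (p ! Suc i)" "rad (p ! Suc i) \<le> \<rho>" using Suc.prems(2)[of "Suc i"] by auto
  have "p ! Suc i \<subseteq> cball c ((2 * real i + 1) * \<rho> + 2 * rad (p ! Suc i))"
    using sphere_subset_cball_if_meets[OF w(1) z(2)] z(1) IH by blast
  also have "\<dots> \<subseteq> cball c ((2 * real (Suc i) + 1) * \<rho>)"
    using w(2) by (intro subset_cball) (simp add: algebra_simps)
  finally show ?case .
qed simp

lemma card_le_by_bounded_overlap:
  fixes q :: "'b \<Rightarrow> 'a::euclidean_space"
  assumes fin: "finite F" and \<rho>: "\<rho> > 0" and R: "R \<ge> 0"
    and inside: "\<And>u. u \<in> F \<Longrightarrow> cball (q u) \<rho> \<subseteq> cball c R"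
    and overlap: "\<And>x. card {u\<in>F. x \<in> cball (q u) \<rho>} \<le> K"
  shows "real (card F) * \<rho> ^ DIM('a) \<le> real K * R ^ DIM('a)"
proof -
  define V where "V = unit_ball_vol (real DIM('a))"
  have V: "V > 0" by (simp add: V_def)
  have pointwise: "(\<Sum>u\<in>F. indicator (cball (q u) \<rho>) x) \<le> of_nat K * (indicator (cball c R) x :: ennreal)" for x
  proof -
    have "(\<Sum>u\<in>F. indicator (cball (q u) \<rho>) x :: ennreal) = of_nat (card {u\<in>F. x \<in> cball (q u) \<rho>})"
      using fin by (simp add: indicator_def sum.If_cases Int_def)
    moreover have "x \<notin> cball c R \<Longrightarrow> {u\<in>F. x \<in> cball (q u) \<rho>} = {}" using inside by blast
    ultimately show ?thesis using overlap[of x] by (cases "x \<in> cball c R") simp_all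
  qed
  have "of_nat (card F) * ennreal (V * \<rho> ^ DIM('a)) = (\<Sum>u\<in>F. emeasure lborel (cball (q u) \<rho>))"
    using \<rho> by (simp add: emeasure_cball V_def)
  also have "\<dots> = (\<integral>\<^sup>+ x. (\<Sum>u\<in>F. indicator (cball (q u) \<rho>) x) \<partial>lborel)"
    by (subst nn_integral_sum) (auto simp: borel_measurable_indicator_iff)
  also have "\<dots> \<le> (\<integral>\<^sup>+ x. of_nat K * indicator (cball c R) x \<partial>lborel)"
    by (rule nn_integral_mono) (use pointwise in auto)
  also have "\<dots> = of_nat K * ennreal (V * R ^ DIM('a))"
    using R by (simp add: nn_integral_cmult_indicator emeasure_cball V_def)
  finally have "ennreal (real (card F) * (V * \<rho> ^ DIM('a))) \<le> ennreal (real K * (V * R ^ DIM('a)))"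
    using V \<rho> R by (simp add: ennreal_of_nat_eq_real_of_nat ennreal_mult)
  then have "V * (real (card F) * \<rho> ^ DIM('a)) \<le> V * (real K * R ^ DIM('a))"
    using V R by (subst (asm) ennreal_le_iff) (auto simp: algebra_simps)
  then show ?thesis using V by simp
qed

section \<open>Spheres whose balls share a point\<close>

lemma card_clique_le_if_no_Ktt:
  assumes "\<not> contains_Ktt V E t" "Q \<subseteq> V" and clique: "\<forall>a\<in>Q. \<forall>b\<in>Q. a \<noteq> b \<longrightarrow> E a b"
  shows "card Q \<le> 2 * t - 1"
proof (rule ccontr)
  assume "\<not> card Q \<le> 2 * t - 1"
  then have "t + t \<le> card Q" by linarith
  then obtain Q' where Q': "Q' \<subseteq> Q" "card Q' = t + t" "finite Q'"
    by (rule obtain_subset_with_card_n)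
  then obtain A where A: "A \<subseteq> Q'" "card A = t" "finite A"
    using obtain_subset_with_card_n[of t Q'] by auto
  have "card (Q' - A) = t" using A Q' by (simp add: card_Diff_subset)
  moreover have "\<forall>a\<in>A. \<forall>b\<in>Q' - A. E a b" using A(1) Q'(1) clique by (metis Diff_iff subsetD)
  ultimately have "contains_Ktt V E t"
    unfolding contains_Ktt_def using A Q' assms(2) by (intro exI[of _ A] exI[of _ "Q' - A"]) auto
  with assms(1) show False by contradiction
qed

lemma sphere_adj_if_sballs_overlap:
  fixes a b :: "'a::euclidean_space set"
  assumes dim: "DIM('a) \<ge> 2" and sph: "is_sphere a" "is_sphere b" and "a \<noteq> b"
    and x: "x \<in> sball a" "x \<in> sball b"
    and incomparable: "\<not> sball a \<subseteq> sball b" "\<not> sball b \<subseteq> sball a"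
  shows "sphere_adj a b"
proof -
  note a = is_sphere_cen_rad[OF sph(1)] and b = is_sphere_cen_rad[OF sph(2)]
  have "sphere (cen a) (rad a) \<inter> sphere (cen b) (rad b) \<noteq> {}"
    by (rule cballs_overlap_imp_spheres_meet[OF dim a(1) b(1)]) (use x incomparable a(3) b(3) in auto)
  with a(2) b(2) \<open>a \<noteq> b\<close> show ?thesis unfolding sphere_adj_def by simp
qed

definition maximal_spheres :: "'a::euclidean_space set set \<Rightarrow> 'a set set" where
  "maximal_spheres P = {a\<in>P. \<forall>b\<in>P. b \<noteq> a \<longrightarrow> \<not> sball a \<subseteq> sball b}"

lemma ex_maximal_sphere_above:
  assumes "finite P" "\<forall>a\<in>P. is_sphere a" "n \<in> P"
  obtains m where "m \<in> maximal_spheres P" "sball n \<subseteq> sball m"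
proof -
  have "asymp_on P (\<lambda>a b. sball a \<subset> sball b)" "transp_on P (\<lambda>a b. sball a \<subset> sball b)"
    by (auto intro!: asymp_onI transp_onI)
  then obtain m where m: "m \<in> P" "sball n \<subseteq> sball m"
    and top: "\<forall>b\<in>P. sball m \<subset> sball b \<longrightarrow> \<not> sball n \<subseteq> sball b"
    using Finite_Set.bex_max_element_with_property[of P _ "\<lambda>b. sball n \<subseteq> sball b"] assms(1,3)
    by blast
  have "\<not> sball m \<subseteq> sball b" if "b \<in> P" "b \<noteq> m" for b
  proof
    assume "sball m \<subseteq> sball b"
    moreover have "sball m \<noteq> sball b" using sball_inject assms(2) that m(1) by metis
    ultimately have "sball m \<subset> sball b" by blast
    with top that m(2) show False by blast
  qed
  then have "m \<in> maximal_spheres P" using m(1) by (simp add: maximal_spheres_def)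
  from this m(2) show thesis by (rule that)
qed

lemma nested_has_greatest:
  assumes "finite N" "N \<noteq> {}" "nested N" "\<forall>a\<in>N. is_sphere a"
  obtains n where "n \<in> N" "\<forall>a\<in>N. sball a \<subseteq> sball n"
proof -
  have "asymp_on N (\<lambda>a b. sball a \<subset> sball b)" "transp_on N (\<lambda>a b. sball a \<subset> sball b)"
    by (auto intro!: asymp_onI transp_onI)
  then obtain n where n: "n \<in> N" and top: "\<forall>a\<in>N. a \<noteq> n \<longrightarrow> \<not> sball n \<subset> sball a"
    using Finite_Set.bex_max_element[of N] assms(1,2) by blast
  have "sball a \<subseteq> sball n" if "a \<in> N" for a
  proof (cases "a = n")
    case False
    then have "sball a \<noteq> sball n" using sball_inject assms(4) that n by metis
    moreover have "sball a \<subseteq> sball n \<or> sball n \<subseteq> sball a" using assms(3) that n by (simp add: nested_iff)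
    ultimately show ?thesis using top that False by blast
  qed simp
  with n show thesis using that by blast
qed

text \<open>A nested family avoiding the maximal spheres extends by a maximal sphere above its greatest
  element.\<close>
lemma nested_card_le_without_maximal:
  assumes fin: "finite P" and sph: "\<forall>a\<in>P. is_sphere a"
    and bound: "\<forall>N. N \<subseteq> P \<and> nested N \<longrightarrow> card N \<le> Suc k"
    and N: "N \<subseteq> P - maximal_spheres P" "nested N"
  shows "card N \<le> k"
proof (cases "N = {}")
  case False
  have "finite N" using N(1) fin finite_subset by blast
  obtain n where n: "n \<in> N" "\<forall>a\<in>N. sball a \<subseteq> sball n"
    using nested_has_greatest[OF \<open>finite N\<close> False N(2)] N(1) sph by blast
  obtain m where m: "m \<in> maximal_spheres P" "sball n \<subseteq> sball m"
    using ex_maximal_sphere_above[OF fin sph] n(1) N(1) by blast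
  have "m \<notin> N" using N(1) m(1) by blast
  have "nested (insert m N)" using N(2) n(2) m(2) unfolding nested_iff by blast
  moreover have "insert m N \<subseteq> P" using m(1) N(1) by (auto simp: maximal_spheres_def)
  ultimately have "card (insert m N) \<le> Suc k" using bound by blast
  with \<open>m \<notin> N\<close> \<open>finite N\<close> show ?thesis by simp
qed simp

text \<open>Peeling off the maximal spheres \<open>k\<close> times; each layer is a clique since its members are
  pairwise incomparable.\<close>
lemma card_le_nested_bound_times_clique_bound:
  assumes "finite P" "\<forall>a\<in>P. is_sphere a"
    and "\<forall>a\<in>P. \<forall>b\<in>P. a \<noteq> b \<longrightarrow> sball a \<subseteq> sball b \<or> sball b \<subseteq> sball a \<or> sphere_adj a b"
    and "\<And>Q. Q \<subseteq> P \<Longrightarrow> \<forall>a\<in>Q. \<forall>b\<in>Q. a \<noteq> b \<longrightarrow> sphere_adj a b \<Longrightarrow> card Q \<le> c"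
    and "\<forall>N. N \<subseteq> P \<and> nested N \<longrightarrow> card N \<le> k"
  shows "card P \<le> k * c"
  using assms
proof (induction k arbitrary: P)
  case 0
  have "a \<notin> P" for a
    using "0.prems"(5)[rule_format, of "{a}"] by (auto simp: nested_iff)
  then have "P = {}" by blast
  then show ?case by simp
next
  case (Suc k)
  define M where "M = maximal_spheres P"
  have "M \<subseteq> P" by (auto simp: M_def maximal_spheres_def)
  have "sphere_adj a b" if "a \<in> M" "b \<in> M" "a \<noteq> b" for a b
  proof -
    have "\<not> sball a \<subseteq> sball b" "\<not> sball b \<subseteq> sball a"
      using that by (auto simp: M_def maximal_spheres_def)
    with Suc.prems(3) that \<open>M \<subseteq> P\<close> show ?thesis by (meson subsetD)
  qed
  then have "card M \<le> c" by (intro Suc.prems(4)[OF \<open>M \<subseteq> P\<close>]) blast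
  moreover have "card (P - M) \<le> k * c"
  proof (rule Suc.IH)
    show "\<forall>N. N \<subseteq> P - M \<and> nested N \<longrightarrow> card N \<le> k"
      using nested_card_le_without_maximal[OF Suc.prems(1,2,5)] by (simp add: M_def)
    show "card Q \<le> c" if "Q \<subseteq> P - M" "\<forall>a\<in>Q. \<forall>b\<in>Q. a \<noteq> b \<longrightarrow> sphere_adj a b" for Q
      using that by (intro Suc.prems(4)) auto
  qed (use Suc.prems(1-3) in auto)
  moreover have "card P = card M + card (P - M)"
    using Suc.prems(1) \<open>M \<subseteq> P\<close> by (simp add: card_Diff_subset finite_subset card_mono)
  ultimately show ?case by simp
qed

lemma card_sballs_through_point_le:
  fixes \<S> :: "'a::euclidean_space set set"
  assumes dim: "DIM('a) \<ge> 2" and "finite \<S>" and sph: "\<forall>u\<in>\<S>. is_sphere u"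
    and "\<not> contains_Ktt \<S> sphere_adj t" and "\<forall>N. N \<subseteq> \<S> \<and> nested N \<longrightarrow> card N \<le> k"
  shows "card {u\<in>\<S>. x \<in> sball u} \<le> k * (2 * t - 1)"
proof (rule card_le_nested_bound_times_clique_bound)
  show "\<forall>a\<in>{u\<in>\<S>. x \<in> sball u}. \<forall>b\<in>{u\<in>\<S>. x \<in> sball u}. a \<noteq> b \<longrightarrow>
      sball a \<subseteq> sball b \<or> sball b \<subseteq> sball a \<or> sphere_adj a b"
    using sphere_adj_if_sballs_overlap[OF dim] sph by blast
  show "card Q \<le> 2 * t - 1" if "Q \<subseteq> {u\<in>\<S>. x \<in> sball u}" "\<forall>a\<in>Q. \<forall>b\<in>Q. a \<noteq> b \<longrightarrow> sphere_adj a b" for Q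
    using card_clique_le_if_no_Ktt[OF assms(4)] that by blast
qed (use assms in auto)

section \<open>Strongly reachable spheres\<close>

lemma card_large_spheres_meeting_cball_le:
  fixes \<S> :: "'a::euclidean_space set set"
  assumes fin: "finite \<S>" and sph: "\<forall>u\<in>\<S>. is_sphere u"
    and overlap: "\<And>x. card {u\<in>\<S>. x \<in> sball u} \<le> K" and \<rho>: "\<rho> > 0" and s: "s \<ge> 0"
  shows "real (card {u\<in>\<S>. \<rho> \<le> rad u \<and> u \<inter> cball c (s * \<rho>) \<noteq> {}}) \<le> real K * (s + 2) ^ DIM('a)"
proof -
  define F where "F = {u\<in>\<S>. \<rho> \<le> rad u \<and> u \<inter> cball c (s * \<rho>) \<noteq> {}}"
  have "\<exists>q. cball q \<rho> \<subseteq> sball u \<and> cball q \<rho> \<subseteq> cball c ((s + 2) * \<rho>)" if uF: "u \<in> F" for u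
  proof -
    have u: "is_sphere u" and large: "\<rho> \<le> rad u" using uF sph by (auto simp: F_def)
    obtain p where p: "p \<in> u" "p \<in> cball c (s * \<rho>)" using uF unfolding F_def by blast
    then have "p \<in> sphere (cen u) (rad u)" using mem_is_sphere_iff[OF u] by simp
    then obtain q where q: "cball q \<rho> \<subseteq> cball (cen u) (rad u)" "cball q \<rho> \<subseteq> cball p (2 * \<rho>)"
      using cball_inside_cball_at_sphere_point[OF \<rho> large] by blast
    have "cball p (2 * \<rho>) \<subseteq> cball c ((s + 2) * \<rho>)"
      using p(2) by (simp add: cball_subset_cball_iff dist_commute algebra_simps)
    with q is_sphere_cen_rad(3)[OF u] show ?thesis by (metis order_trans)
  qed
  then obtain q where q: "\<And>u. u \<in> F \<Longrightarrow> cball (q u) \<rho> \<subseteq> sball u \<and> cball (q u) \<rho> \<subseteq> cball c ((s + 2) * \<rho>)"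
    by metis
  have "real (card F) * \<rho> ^ DIM('a) \<le> real K * ((s + 2) * \<rho>) ^ DIM('a)"
  proof (rule card_le_by_bounded_overlap)
    fix x
    have "F \<subseteq> \<S>" by (auto simp: F_def)
    with q have "{u\<in>F. x \<in> cball (q u) \<rho>} \<subseteq> {u\<in>\<S>. x \<in> sball u}" by blast
    then have "card {u\<in>F. x \<in> cball (q u) \<rho>} \<le> card {u\<in>\<S>. x \<in> sball u}"
      using fin by (intro card_mono) simp_all
    with overlap[of x] show "card {u\<in>F. x \<in> cball (q u) \<rho>} \<le> K" by simp
  qed (use fin \<rho> s q in \<open>auto simp: F_def\<close>)
  also have "\<dots> = (real K * (s + 2) ^ DIM('a)) * \<rho> ^ DIM('a)"
    by (simp add: power_mult_distrib)
  finally show ?thesis using \<rho> by (simp add: F_def)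
qed

lemma finite_linear_order_antimono:
  fixes f :: "'b \<Rightarrow> 'c::linorder"
  assumes "finite V"
  obtains L where "linear_order_on V L" "\<And>x y. (x, y) \<in> L \<Longrightarrow> f y \<le> f x"
proof -
  obtain g :: "'b \<Rightarrow> nat" where g: "inj_on g V" using finite_imp_inj_to_nat_seg[OF assms] by blast
  define L where "L = {(x, y). x \<in> V \<and> y \<in> V \<and> (f y < f x \<or> (f y = f x \<and> g x \<le> g y))}"
  have "linear_order_on V L"
    unfolding linear_order_on_def partial_order_on_def preorder_on_def refl_on_def trans_def
      antisym_def total_on_def
  proof (intro conjI allI impI ballI)
    fix x y assume "(x, y) \<in> L" "(y, x) \<in> L"
    then show "x = y" using g by (auto simp: L_def inj_on_def)
  next
    fix x y assume "x \<in> V" "y \<in> V" "x \<noteq> y"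
    then show "(x, y) \<in> L \<or> (y, x) \<in> L" using g by (auto simp: L_def inj_on_def)
  qed (auto simp: L_def)
  moreover have "\<And>x y. (x, y) \<in> L \<Longrightarrow> f y \<le> f x" by (auto simp: L_def)
  ultimately show thesis by (rule that)
qed


lemma sphere_Int_cball_cen_nonempty:
  fixes v :: "'a::euclidean_space set"
  assumes "is_sphere v" "1 \<le> s"
  shows "v \<inter> cball (cen v) (s * rad v) \<noteq> {}"
proof -
  obtain e :: 'a where e: "norm e = 1" using vector_choose_size[of 1] by auto
  have "rad v > 0" using is_sphere_cen_rad(1)[OF assms(1)] .
  then have "cen v + rad v *\<^sub>R e \<in> v \<inter> cball (cen v) (s * rad v)"
    using e assms mem_is_sphere_iff[OF assms(1)] by (simp add: dist_norm)
  then show ?thesis by blast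
qed

text \<open>All vertices of the witnessing path except \<open>u\<close> come after \<open>v\<close> in \<open>L\<close>, hence are no
  larger than \<open>v\<close>; so the path stays close to \<open>v\<close> until its last step.\<close>
lemma strongly_reachable_near:
  fixes \<S> :: "'a::euclidean_space set set"
  assumes sph: "\<forall>S\<in>\<S>. is_sphere S" and "v \<in> \<S>" and "r > 0"
    and L: "\<And>x y. (x, y) \<in> L \<Longrightarrow> rad y \<le> rad x"
    and sr: "strongly_reachable \<S> sphere_adj L r v u"
  shows "rad v \<le> rad u" "u \<inter> cball (cen v) ((2 * real r - 1) * rad v) \<noteq> {}"
proof -
  obtain p where p: "is_path \<S> sphere_adj p" "hd p = v" "last p = u" "length p \<le> r + 1"
    and above: "\<forall>w\<in>set p. w \<noteq> u \<longrightarrow> (v, w) \<in> L" and "(u, v) \<in> L"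
    using sr unfolding strongly_reachable_def by blast
  then show "rad v \<le> rad u" using L by blast
  define n where "n = length p"
  have "p \<noteq> []" "distinct p" "set p \<subseteq> \<S>"
    and meets: "\<And>j. Suc j < n \<Longrightarrow> p ! j \<inter> p ! Suc j \<noteq> {}"
    using p(1) by (auto simp: is_path_def sphere_adj_def n_def)
  then have v0: "p ! 0 = v" and un: "p ! (n - 1) = u" and "n \<ge> 1"
    using p(2,3) by (simp_all add: hd_conv_nth last_conv_nth n_def Suc_le_eq)
  have v: "is_sphere v" "rad v > 0" using sph \<open>v \<in> \<S>\<close> is_sphere_cen_rad(1) by auto
  have v_in: "v \<subseteq> cball (cen v) (rad v)" using mem_is_sphere_iff[OF v(1)] by auto
  show "u \<inter> cball (cen v) ((2 * real r - 1) * rad v) \<noteq> {}"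
  proof (cases "n = 1")
    case True
    then have "u = v" using v0 un by simp
    with sphere_Int_cball_cen_nonempty[OF v(1)] \<open>r > 0\<close> show ?thesis by simp
  next
    case False
    define m where "m = n - 2"
    have mn: "Suc m = n - 1" "Suc m < n" using False \<open>n \<ge> 1\<close> by (simp_all add: m_def)
    have "p ! m \<subseteq> cball (cen v) ((2 * real m + 1) * rad v)"
    proof (rule sphere_chain_subset_cball)
      fix j assume j: "0 < j" "j \<le> m"
      then have "j < n" "j \<noteq> n - 1" using mn by simp_all
      then have "p ! j \<in> set p" "p ! j \<noteq> u"
        using nth_eq_iff_index_eq[OF \<open>distinct p\<close>, of j "n - 1"] un mn(2) by (simp_all add: n_def)
      then show "is_sphere (p ! j) \<and> rad (p ! j) \<le> rad v"
        using above L sph \<open>set p \<subseteq> \<S>\<close> by blast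
    qed (use meets mn v0 v_in in auto)
    moreover have "(2 * real m + 1) * rad v \<le> (2 * real r - 1) * rad v"
      using p(4) mn v(2) by (intro mult_right_mono) (simp_all add: n_def)
    ultimately have "p ! m \<subseteq> cball (cen v) ((2 * real r - 1) * rad v)"
      using subset_cball by blast
    with meets[OF mn(2)] mn(1) un show ?thesis by auto
  qed
qed

lemma card_sreach_set_le:
  fixes \<S> :: "'a::euclidean_space set set"
  assumes fin: "finite \<S>" and sph: "\<forall>S\<in>\<S>. is_sphere S" and "v \<in> \<S>" and "r > 0"
    and L: "\<And>x y. (x, y) \<in> L \<Longrightarrow> rad y \<le> rad x"
    and overlap: "\<And>x. card {u\<in>\<S>. x \<in> sball u} \<le> K"
  shows "card (sreach_set \<S> sphere_adj L r v) \<le> K * (2 * r + 1) ^ DIM('a)"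
proof -
  define s where "s = 2 * real r - 1"
  have "rad v > 0" using sph \<open>v \<in> \<S>\<close> is_sphere_cen_rad(1) by auto
  have "sreach_set \<S> sphere_adj L r v \<subseteq> {u\<in>\<S>. rad v \<le> rad u \<and> u \<inter> cball (cen v) (s * rad v) \<noteq> {}}"
    using strongly_reachable_near[OF sph \<open>v \<in> \<S>\<close> \<open>r > 0\<close> L] by (auto simp: sreach_set_def s_def)
  then have "real (card (sreach_set \<S> sphere_adj L r v))
      \<le> real (card {u\<in>\<S>. rad v \<le> rad u \<and> u \<inter> cball (cen v) (s * rad v) \<noteq> {}})"
    using fin by (intro of_nat_mono card_mono) simp_all
  also have "\<dots> \<le> real K * (s + 2) ^ DIM('a)"
    using \<open>r > 0\<close> by (intro card_large_spheres_meeting_cball_le[OF fin sph overlap \<open>rad v > 0\<close>])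
      (simp add: s_def)
  also have "\<dots> = real (K * (2 * r + 1) ^ DIM('a))" by (simp add: s_def)
  finally show ?thesis by (simp only: of_nat_le_iff)
qed

lemma r_width_le:
  assumes "finite V" "\<And>v. v \<in> V \<Longrightarrow> card (sreach_set V E L r v) \<le> B"
  shows "r_width V E L r \<le> B"
  unfolding r_width_def using assms by (subst Max_le_iff) auto

lemma scol_le_r_width:
  assumes "finite V" "linear_order_on V L"
  shows "scol V E r \<le> r_width V E L r"
proof -
  have "{r_width V E L' r | L'. linear_order_on V L'} \<subseteq> (\<lambda>L'. r_width V E L' r) ` Pow (V \<times> V)"
    by (auto simp: linear_order_on_def partial_order_on_def preorder_on_def)
  then have "finite {r_width V E L' r | L'. linear_order_on V L'}"
    by (rule finite_subset) (simp add: assms(1))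
  with assms(2) show ?thesis unfolding scol_def by (intro Min_le) auto
qed

theorem lemma4p3:
  fixes \<S> :: "'a::euclidean_space set set" and t k r :: nat
  assumes "DIM('a) \<ge> 2" and "t > 0" and "k > 0"
    and "finite \<S>" and "\<forall>S\<in>\<S>. is_sphere S"
    and "\<not> contains_Ktt \<S> sphere_adj t"
    and "\<forall>N. N \<subseteq> \<S> \<and> nested N \<longrightarrow> card N \<le> k"
    and "r > 0"
  shows "scol \<S> sphere_adj r \<le> 2 * k * t * (2 * r + 2) ^ DIM('a)"
proof -
  define K where "K = k * (2 * t - 1)"
  have overlap: "card {u\<in>\<S>. x \<in> sball u} \<le> K" for x
    unfolding K_def using card_sballs_through_point_le assms(1,4-7) by blast
  obtain L where L: "linear_order_on \<S> L" "\<And>x y. (x, y) \<in> L \<Longrightarrow> rad y \<le> rad x"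
    using finite_linear_order_antimono[OF assms(4)] by blast
  have "scol \<S> sphere_adj r \<le> r_width \<S> sphere_adj L r"
    by (rule scol_le_r_width[OF assms(4) L(1)])
  also have "\<dots> \<le> K * (2 * r + 1) ^ DIM('a)"
    using card_sreach_set_le[OF assms(4,5) _ assms(8) L(2) overlap] by (intro r_width_le[OF assms(4)])
  also have "\<dots> \<le> 2 * k * t * (2 * r + 2) ^ DIM('a)"
  proof (rule mult_le_mono)
    show "K \<le> 2 * k * t" by (simp add: K_def right_diff_distrib')
  qed (simp add: power_mono)
  finally show ?thesis .
qed

end
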